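(* For every precubical set $X$, the stream realization $\vec{|X|}$ is vortex-free, i.e. every point $x\in\vec{|X|}$ has an open neighborhood $V$ for which the preorder $\leqslant_V$ is antisymmetric.
   Context: A circulation on a topological space $X$ is a function assigning to each open $V\subset X$ a preorder $\leqslant_V$ on $V$ such that for every collection $\mathcal{O}$ of open subsets, $\leqslant_{\bigcup\mathcal{O}}$ is the preorder on $\bigcup\mathcal{O}$ with smallest graph containing $\bigcup_{V\in\mathcal{O}}\mathrm{graph}(\leqslant_V)$. A stream is a space with a circulation; a stream map $f:X\to Y$ is a continuous map with $f(x)\leqslant_V f(y)$ whenever $x\leqslant_{f^{-1}V}y$, for every open $V\subset Y$. The category of streams is cocomplete, colimits being computed on underlying spaces with the final circulation. A vortex of a stream is a point $x$ such that $\leqslant_V$ fails to be antisymmetric for every open neighborhood $V$ of $x$; a stream is vortex-free if it has no vortices. Precubical sets: let $\square$ be the smallest subcategory of posets and monotone maps closed under cartesian products (unit $[0]=\{0\}$) containing $\delta_-,\delta_+:[0]\to[1]=\{0<1\}$ (sending $0$ to $0$, resp. $1$); its objects are the $[1]^n$. A precubical set is a functor $X:\square^{op}\to\mathbf{Set}$, $X_n=X([1]^n)$. Let $\vec\square[1]$ be $[0,1]$ with circulation $x\leqslant_V y$ iff $x\le y$ and $[x,y]\subset V$, and $\vec\square[n]$ its $n$-fold product in streams; $\square$-morphisms extend linearly to stream maps between these. The stream realization is the coend $\vec{|X|}=\int^{[1]^n\in\square}X_n\cdot\vec\square[n]$ in streams, with underlying space the geometric realization $|X|$. *)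

theory Defs
  imports "HOL-Analysis.Analysis"
begin

text \<open>A circulation on a topological space T is encoded as a function C assigning
to every set a relation; on open sets V it is a preorder on V, on non-open sets
it is the empty relation (normalisation, so that a circulation is determined by
its values on open sets).\<close>

definition is_circulation :: "'a topology \<Rightarrow> ('a set \<Rightarrow> ('a \<times> 'a) set) \<Rightarrow> bool" where
  "is_circulation T C \<longleftrightarrow>
     (\<forall>V. \<not> openin T V \<longrightarrow> C V = {}) \<and>
     (\<forall>V. openin T V \<longrightarrow> C V \<subseteq> V \<times> V \<and> refl_on V (C V) \<and> trans (C V)) \<and>
     (\<forall>Os. (\<forall>V\<in>Os. openin T V) \<longrightarrow>
          C (\<Union>Os) = Id_on (\<Union>Os) \<union> (\<Union>V\<in>Os. C V)\<^sup>+)"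

definition stream_map ::
  "'a topology \<Rightarrow> ('a set \<Rightarrow> ('a \<times> 'a) set) \<Rightarrow>
   'b topology \<Rightarrow> ('b set \<Rightarrow> ('b \<times> 'b) set) \<Rightarrow> ('a \<Rightarrow> 'b) \<Rightarrow> bool" where
  "stream_map T C S D f \<longleftrightarrow> continuous_map T S f \<and>
     (\<forall>V. openin S V \<longrightarrow>
        (\<forall>x y. (x, y) \<in> C {z \<in> topspace T. f z \<in> V} \<longrightarrow> (f x, f y) \<in> D V))"

definition vortex :: "'a topology \<Rightarrow> ('a set \<Rightarrow> ('a \<times> 'a) set) \<Rightarrow> 'a \<Rightarrow> bool" where
  "vortex T C x \<longleftrightarrow> x \<in> topspace T \<and>
     (\<forall>V. openin T V \<and> x \<in> V \<longrightarrow> \<not> antisym (C V))"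

definition vortex_free :: "'a topology \<Rightarrow> ('a set \<Rightarrow> ('a \<times> 'a) set) \<Rightarrow> bool" where
  "vortex_free T C \<longleftrightarrow> (\<forall>x\<in>topspace T. \<not> vortex T C x)"

definition interval_top :: "real topology" where
  "interval_top = top_of_set {0..1}"

definition interval_circ :: "real set \<Rightarrow> (real \<times> real) set" where
  "interval_circ V = (if openin interval_top V then {(x, y). x \<le> y \<and> {x..y} \<subseteq> V} else {})"

text \<open>[0,1]^n, encoded as functions nat => real vanishing from index n on,
with the (product) topology.\<close>

definition cube :: "nat \<Rightarrow> (nat \<Rightarrow> real) set" where
  "cube n = {t. (\<forall>i<n. 0 \<le> t i \<and> t i \<le> 1) \<and> (\<forall>i\<ge>n. t i = 0)}"

definition cube_top :: "nat \<Rightarrow> (nat \<Rightarrow> real) topology" where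
  "cube_top n = top_of_set (cube n)"

text \<open>The n-fold product of the directed interval in the category of streams:
the product topology with the initial circulation w.r.t. the projections, i.e.
the greatest circulation making all projections stream maps.\<close>

definition cube_circ :: "nat \<Rightarrow> (nat \<Rightarrow> real) set \<Rightarrow> ((nat \<Rightarrow> real) \<times> (nat \<Rightarrow> real)) set" where
  "cube_circ n = (THE C. is_circulation (cube_top n) C \<and>
      (\<forall>i<n. stream_map (cube_top n) C interval_top interval_circ (\<lambda>t. t i)) \<and>
      (\<forall>C'. is_circulation (cube_top n) C' \<and>
            (\<forall>i<n. stream_map (cube_top n) C' interval_top interval_circ (\<lambda>t. t i))
            \<longrightarrow> (\<forall>V. C' V \<subseteq> C V)))"

text \<open>A precubical set is given by its set of cubes X (of some type 'c), a
dimension function and face maps d i k : X_n -> X_(n-1) (i < n, coordinates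
counted from 0, k = False for delta_minus and k = True for delta_plus),
satisfying the precubical identities; this is the usual presentation of
functors from the box category (generated by the coface maps) to Set.\<close>

definition precubical :: "'c set \<Rightarrow> ('c \<Rightarrow> nat) \<Rightarrow> (nat \<Rightarrow> bool \<Rightarrow> 'c \<Rightarrow> 'c) \<Rightarrow> bool" where
  "precubical X dm d \<longleftrightarrow>
     (\<forall>c\<in>X. \<forall>i<dm c. \<forall>k. d i k c \<in> X \<and> dm (d i k c) = dm c - 1) \<and>
     (\<forall>c\<in>X. \<forall>i j k l. i < j \<and> j < dm c \<longrightarrow> d i k (d j l c) = d (j - 1) l (d i k c))"

definition coface :: "nat \<Rightarrow> bool \<Rightarrow> (nat \<Rightarrow> real) \<Rightarrow> (nat \<Rightarrow> real)" where
  "coface i k t = (\<lambda>j. if j < i then t j else if j = i then (if k then 1 else 0) else t (j - 1))"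

definition real_pts :: "'c set \<Rightarrow> ('c \<Rightarrow> nat) \<Rightarrow> ('c \<times> (nat \<Rightarrow> real)) set" where
  "real_pts X dm = {(c, t). c \<in> X \<and> t \<in> cube (dm c)}"

definition real_gen ::
  "'c set \<Rightarrow> ('c \<Rightarrow> nat) \<Rightarrow> (nat \<Rightarrow> bool \<Rightarrow> 'c \<Rightarrow> 'c) \<Rightarrow> (('c \<times> (nat \<Rightarrow> real)) \<times> ('c \<times> (nat \<Rightarrow> real))) set" where
  "real_gen X dm d = {((d i k c, t), (c, coface i k t)) | c i k t.
      c \<in> X \<and> i < dm c \<and> t \<in> cube (dm c - 1)}"

definition real_equiv ::
  "'c set \<Rightarrow> ('c \<Rightarrow> nat) \<Rightarrow> (nat \<Rightarrow> bool \<Rightarrow> 'c \<Rightarrow> 'c) \<Rightarrow> (('c \<times> (nat \<Rightarrow> real)) \<times> ('c \<times> (nat \<Rightarrow> real))) set" where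
  "real_equiv X dm d = Id_on (real_pts X dm) \<union> (real_gen X dm d \<union> (real_gen X dm d)\<inverse>)\<^sup>+"

definition real_space :: "'c set \<Rightarrow> ('c \<Rightarrow> nat) \<Rightarrow> (nat \<Rightarrow> bool \<Rightarrow> 'c \<Rightarrow> 'c) \<Rightarrow> ('c \<times> (nat \<Rightarrow> real)) set set" where
  "real_space X dm d = real_pts X dm // real_equiv X dm d"

definition real_map ::
  "'c set \<Rightarrow> ('c \<Rightarrow> nat) \<Rightarrow> (nat \<Rightarrow> bool \<Rightarrow> 'c \<Rightarrow> 'c) \<Rightarrow> 'c \<Rightarrow> (nat \<Rightarrow> real) \<Rightarrow> ('c \<times> (nat \<Rightarrow> real)) set" where
  "real_map X dm d c t = real_equiv X dm d `` {(c, t)}"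

definition real_top :: "'c set \<Rightarrow> ('c \<Rightarrow> nat) \<Rightarrow> (nat \<Rightarrow> bool \<Rightarrow> 'c \<Rightarrow> 'c) \<Rightarrow> ('c \<times> (nat \<Rightarrow> real)) set topology" where
  "real_top X dm d = topology (\<lambda>U. U \<subseteq> real_space X dm d \<and>
      (\<forall>c\<in>X. openin (cube_top (dm c)) {t \<in> cube (dm c). real_map X dm d c t \<in> U}))"

definition real_circ ::
  "'c set \<Rightarrow> ('c \<Rightarrow> nat) \<Rightarrow> (nat \<Rightarrow> bool \<Rightarrow> 'c \<Rightarrow> 'c) \<Rightarrow>
   ('c \<times> (nat \<Rightarrow> real)) set set \<Rightarrow> (('c \<times> (nat \<Rightarrow> real)) set \<times> ('c \<times> (nat \<Rightarrow> real)) set) set" where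
  "real_circ X dm d = (THE C. is_circulation (real_top X dm d) C \<and>
      (\<forall>c\<in>X. stream_map (cube_top (dm c)) (cube_circ (dm c)) (real_top X dm d) C (real_map X dm d c)) \<and>
      (\<forall>C'. is_circulation (real_top X dm d) C' \<and>
            (\<forall>c\<in>X. stream_map (cube_top (dm c)) (cube_circ (dm c)) (real_top X dm d) C' (real_map X dm d c))
            \<longrightarrow> (\<forall>V. C V \<subseteq> C' V)))"

end

theory Submission
  imports Defs
begin

(* 1. Circulations generated by local relations (gen_circ) describe explicitly both universal
      circulations in play: the circulation of the n-cube (the greatest one making all
      projections to the directed interval stream maps) and that of the realization (the
      least one making all characteristic maps stream maps).  Of the cube circulation we
      only need that its relations increase every coordinate.
   2. Cofaces only insert constant coordinates 0 or 1.  Hence, for 0 < \<theta> < 1, both the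
      potential  sum_j (t j - [t j > \<theta>])  of a cube point and the property "no coordinate
      equals \<theta>" are constant on the classes of the realization.
   3. The classes none of whose coordinates equals \<theta> form an open set.  On it, every
      generating step of the circulation strictly increases the potential unless it is
      trivial, since away from the hyperplanes t j = \<theta> the potential is locally the
      coordinate sum up to a constant; so the circulation is antisymmetric there.
   4. Choosing \<theta> in ]0,1[ different from the finitely many coordinates of a representative
      shows that every point has such a neighbourhood. *)

lemma circ_cosheaf:
  "is_circulation T C \<Longrightarrow> \<forall>V\<in>Os. openin T V \<Longrightarrow> C (\<Union>Os) = Id_on (\<Union>Os) \<union> (\<Union>V\<in>Os. C V)\<^sup>+"
  unfolding is_circulation_def by blast

lemma circ_sub: "is_circulation T C \<Longrightarrow> C V \<subseteq> V \<times> V"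
  unfolding is_circulation_def by (cases "openin T V") auto

lemma circ_opendom: "is_circulation T C \<Longrightarrow> (x, y) \<in> C V \<Longrightarrow> openin T V"
  unfolding is_circulation_def by fastforce

lemma circ_refl: "is_circulation T C \<Longrightarrow> openin T V \<Longrightarrow> x \<in> V \<Longrightarrow> (x, x) \<in> C V"
  unfolding is_circulation_def by (meson refl_onD)

lemma circ_trans: "is_circulation T C \<Longrightarrow> trans (C V)"
  unfolding is_circulation_def by (cases "openin T V") (auto intro: transI)

text \<open>Circulations are monotone: this is the cosheaf condition for the cover {U, U'} of U'.\<close>

lemma circ_mono:
  assumes C: "is_circulation T C" and "openin T U" "openin T U'" "U \<subseteq> U'"
  shows "C U \<subseteq> C U'"
proof -
  have cover: "C (\<Union>{U, U'}) = Id_on (\<Union>{U, U'}) \<union> (\<Union>V\<in>{U, U'}. C V)\<^sup>+"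
    using assms(2,3) by (intro circ_cosheaf[OF C]) auto
  have "C U \<subseteq> (\<Union>V\<in>{U, U'}. C V)\<^sup>+"
    by (auto intro: r_into_trancl')
  also have "\<dots> \<subseteq> C (\<Union>{U, U'})"
    unfolding cover by (rule Un_upper2)
  also have "\<Union>{U, U'} = U'"
    using assms(4) by blast
  finally show ?thesis .
qed

lemma trancl_map_into_trans:
  assumes "(x, y) \<in> A\<^sup>+" "\<And>a b. (a, b) \<in> A \<Longrightarrow> (f a, f b) \<in> B" "trans B"
  shows "(f x, f y) \<in> B"
  using assms(1)
proof induction
  case (step y z)
  thus ?case using assms(2,3) by (blast dest: transD)
qed (use assms(2) in blast)

lemma trans_Id_on_trancl: "trans (Id_on A \<union> R\<^sup>+)"
proof (rule transI)
  fix x y z assume "(x, y) \<in> Id_on A \<union> R\<^sup>+" "(y, z) \<in> Id_on A \<union> R\<^sup>+"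
  thus "(x, z) \<in> Id_on A \<union> R\<^sup>+" by (auto dest: trancl_trans)
qed

lemma trancl_least: "R \<subseteq> S \<Longrightarrow> trans S \<Longrightarrow> R\<^sup>+ \<subseteq> S"
  by (metis trancl_id trancl_mono_subset)

text \<open>The relation "f strictly increases, or the points coincide": a partial order
whenever f takes values in an order.  Potentials of this kind witness antisymmetry.\<close>

definition ascends :: "('a \<Rightarrow> 'b::order) \<Rightarrow> ('a \<times> 'a) set" where
  "ascends f = {(a, b). f a < f b \<or> a = b}"

lemma trans_ascends: "trans (ascends f)"
  unfolding ascends_def by (rule transI) (auto elim: order.strict_trans)

lemma antisym_ascends: "antisym (ascends f)"
  unfolding ascends_def by (rule antisymI) auto

lemma antisym_by_potential:
  assumes "R \<subseteq> ascends f"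
  shows "antisym (Id_on A \<union> R\<^sup>+)"
proof (rule antisym_subset[OF _ antisym_ascends])
  have "R\<^sup>+ \<subseteq> ascends f"
    using assms trans_ascends by (rule trancl_least)
  moreover have "Id_on A \<subseteq> ascends f"
    by (auto simp: ascends_def)
  ultimately show "Id_on A \<union> R\<^sup>+ \<subseteq> ascends f" by blast
qed

text \<open>Given a relation G V for every open V, the preorders generated by the G V form a
circulation as soon as G is monotone and local (a G-step over a union of opens is a chain
of G-steps over members of the union).  Both the product circulation on cubes and the
circulation of the realization arise this way.\<close>

definition gen_circ :: "'a topology \<Rightarrow> ('a set \<Rightarrow> ('a \<times> 'a) set) \<Rightarrow> 'a set \<Rightarrow> ('a \<times> 'a) set" where
  "gen_circ T G V = (if openin T V then Id_on V \<union> (G V)\<^sup>+ else {})"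

lemma gen_circ_union:
  assumes mono: "\<And>U V. openin T U \<Longrightarrow> openin T V \<Longrightarrow> U \<subseteq> V \<Longrightarrow> G U \<subseteq> G V"
    and local: "G (\<Union>Os) \<subseteq> Id_on (\<Union>Os) \<union> (\<Union>V\<in>Os. G V)\<^sup>+"
    and Os: "\<forall>V\<in>Os. openin T V"
  shows "gen_circ T G (\<Union>Os) = Id_on (\<Union>Os) \<union> (\<Union>V\<in>Os. gen_circ T G V)\<^sup>+"
    (is "_ = ?R")
proof
  have open_union: "openin T (\<Union>Os)" using Os by auto
  hence eq: "gen_circ T G (\<Union>Os) = Id_on (\<Union>Os) \<union> (G (\<Union>Os))\<^sup>+" by (simp add: gen_circ_def)
  have "(\<Union>V\<in>Os. G V) \<subseteq> (\<Union>V\<in>Os. gen_circ T G V)"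
    using Os by (force simp: gen_circ_def)
  hence "G (\<Union>Os) \<subseteq> ?R"
    using local trancl_mono_subset by blast
  hence "(G (\<Union>Os))\<^sup>+ \<subseteq> ?R"
    using trans_Id_on_trancl by (rule trancl_least)
  thus "gen_circ T G (\<Union>Os) \<subseteq> ?R"
    unfolding eq by blast
  have "gen_circ T G V \<subseteq> gen_circ T G (\<Union>Os)" if "V \<in> Os" for V
  proof -
    have "G V \<subseteq> G (\<Union>Os)" using that Os open_union mono by blast
    hence "(G V)\<^sup>+ \<subseteq> (G (\<Union>Os))\<^sup>+" by (rule trancl_mono_subset)
    thus ?thesis using that Os unfolding eq by (auto simp: gen_circ_def)
  qed
  hence "(\<Union>V\<in>Os. gen_circ T G V)\<^sup>+ \<subseteq> gen_circ T G (\<Union>Os)"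
    using trans_Id_on_trancl unfolding eq by (intro trancl_least) blast+
  thus "?R \<subseteq> gen_circ T G (\<Union>Os)" unfolding eq by blast
qed

lemma gen_circ_is_circulation:
  assumes sub: "\<And>V. openin T V \<Longrightarrow> G V \<subseteq> V \<times> V"
    and mono: "\<And>U V. openin T U \<Longrightarrow> openin T V \<Longrightarrow> U \<subseteq> V \<Longrightarrow> G U \<subseteq> G V"
    and local: "\<And>Os. \<forall>V\<in>Os. openin T V \<Longrightarrow> G (\<Union>Os) \<subseteq> Id_on (\<Union>Os) \<union> (\<Union>V\<in>Os. G V)\<^sup>+"
  shows "is_circulation T (gen_circ T G)"
  unfolding is_circulation_def
proof (intro conjI allI impI)
  fix V assume "\<not> openin T V" thus "gen_circ T G V = {}" by (simp add: gen_circ_def)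
next
  fix V assume V: "openin T V"
  hence eq: "gen_circ T G V = Id_on V \<union> (G V)\<^sup>+" by (simp add: gen_circ_def)
  show "gen_circ T G V \<subseteq> V \<times> V"
    unfolding eq using trancl_subset_Sigma[OF sub[OF V]] Id_on_subset_Times by blast
  show "refl_on V (gen_circ T G V)"
    unfolding eq refl_on_def by blast
  show "trans (gen_circ T G V)"
    unfolding eq by (rule trans_Id_on_trancl)
next
  fix Os assume "\<forall>V\<in>Os. openin T V"
  thus "gen_circ T G (\<Union>Os) = Id_on (\<Union>Os) \<union> (\<Union>V\<in>Os. gen_circ T G V)\<^sup>+"
    using mono local by (intro gen_circ_union)
qed

lemma gen_circ_base: "openin T V \<Longrightarrow> G V \<subseteq> gen_circ T G V"
  unfolding gen_circ_def using r_into_trancl' by auto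

lemma gen_circ_least:
  assumes C: "is_circulation T C" and G: "\<And>V. openin T V \<Longrightarrow> G V \<subseteq> C V"
  shows "gen_circ T G V \<subseteq> C V"
proof (cases "openin T V")
  case True
  have "(G V)\<^sup>+ \<subseteq> C V"
    using G[OF True] circ_trans[OF C] by (rule trancl_least)
  moreover have "Id_on V \<subseteq> C V"
    using circ_refl[OF C True] by blast
  ultimately show ?thesis using True by (simp add: gen_circ_def)
qed (simp add: gen_circ_def)

lemma the_greatest_circ:
  assumes a: "P a \<and> Q a" and greatest: "\<And>b. P b \<and> Q b \<Longrightarrow> \<forall>V. b V \<subseteq> a V"
  shows "(THE a. P a \<and> Q a \<and> (\<forall>b. P b \<and> Q b \<longrightarrow> (\<forall>V. b V \<subseteq> a V))) = a"
proof (rule the_equality)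
  show "P a \<and> Q a \<and> (\<forall>b. P b \<and> Q b \<longrightarrow> (\<forall>V. b V \<subseteq> a V))"
    using a greatest by simp
next
  fix a' assume a': "P a' \<and> Q a' \<and> (\<forall>b. P b \<and> Q b \<longrightarrow> (\<forall>V. b V \<subseteq> a' V))"
  hence "a' V \<subseteq> a V" and "a V \<subseteq> a' V" for V
    using a greatest by simp_all
  thus "a' = a" by (simp add: fun_eq_iff subset_antisym)
qed

lemma the_least_circ:
  assumes a: "P a \<and> Q a" and least: "\<And>b. P b \<and> Q b \<Longrightarrow> \<forall>V. a V \<subseteq> b V"
  shows "(THE a. P a \<and> Q a \<and> (\<forall>b. P b \<and> Q b \<longrightarrow> (\<forall>V. a V \<subseteq> b V))) = a"
proof (rule the_equality)
  show "P a \<and> Q a \<and> (\<forall>b. P b \<and> Q b \<longrightarrow> (\<forall>V. a V \<subseteq> b V))"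
    using a least by simp
next
  fix a' assume a': "P a' \<and> Q a' \<and> (\<forall>b. P b \<and> Q b \<longrightarrow> (\<forall>V. a' V \<subseteq> b V))"
  hence "a V \<subseteq> a' V" and "a' V \<subseteq> a V" for V
    using a least by simp_all
  thus "a' = a" by (simp add: fun_eq_iff subset_antisym)
qed

section \<open>The directed cubes\<close>

lemma interval_circ_refl: "openin interval_top W \<Longrightarrow> x \<in> W \<Longrightarrow> (x, x) \<in> interval_circ W"
  by (simp add: interval_circ_def)

lemma interval_circ_trans: "trans (interval_circ W)"
proof (rule transI)
  fix x y z assume "(x, y) \<in> interval_circ W" "(y, z) \<in> interval_circ W"
  hence "openin interval_top W" "x \<le> y" "y \<le> z" "{x..y} \<union> {y..z} \<subseteq> W"
    by (auto simp: interval_circ_def split: if_splits)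
  moreover have "{x..z} \<subseteq> {x..y} \<union> {y..z}" by auto
  ultimately show "(x, z) \<in> interval_circ W" by (auto simp: interval_circ_def)
qed

lemma proj_continuous: "i < n \<Longrightarrow> continuous_map (cube_top n) interval_top (\<lambda>t. t i)"
  unfolding cube_top_def interval_top_def continuous_map_subtopology_eu
  by (auto simp: cube_def intro: continuous_on_subset[OF continuous_on_product_coordinates])

definition proj_directed :: "nat \<Rightarrow> ((nat \<Rightarrow> real) set \<Rightarrow> ((nat \<Rightarrow> real) \<times> (nat \<Rightarrow> real)) set) \<Rightarrow> bool" where
  "proj_directed n C \<longleftrightarrow> (\<forall>i<n. stream_map (cube_top n) C interval_top interval_circ (\<lambda>t. t i))"

lemma proj_directedD:
  "proj_directed n C \<Longrightarrow> i < n \<Longrightarrow> openin interval_top W \<Longrightarrow>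
   (x, y) \<in> C {z \<in> topspace (cube_top n). z i \<in> W} \<Longrightarrow> (x i, y i) \<in> interval_circ W"
  unfolding proj_directed_def stream_map_def by blast

text \<open>The union of all these circulations; the greatest one is the circulation it generates.\<close>

definition cube_gen :: "nat \<Rightarrow> (nat \<Rightarrow> real) set \<Rightarrow> ((nat \<Rightarrow> real) \<times> (nat \<Rightarrow> real)) set" where
  "cube_gen n V = (\<Union>C\<in>{C. is_circulation (cube_top n) C \<and> proj_directed n C}. C V)"

lemma cube_gen_circulation: "is_circulation (cube_top n) (gen_circ (cube_top n) (cube_gen n))"
proof (rule gen_circ_is_circulation)
  fix V show "cube_gen n V \<subseteq> V \<times> V"
    unfolding cube_gen_def
  proof (rule UN_least)
    fix C assume "C \<in> {C. is_circulation (cube_top n) C \<and> proj_directed n C}"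
    thus "C V \<subseteq> V \<times> V" using circ_sub[of "cube_top n" C V] by simp
  qed
next
  fix U V assume UV: "openin (cube_top n) U" "openin (cube_top n) V" "U \<subseteq> V"
  show "cube_gen n U \<subseteq> cube_gen n V"
    unfolding cube_gen_def
  proof (rule UN_mono)
    fix C assume "C \<in> {C. is_circulation (cube_top n) C \<and> proj_directed n C}"
    thus "C U \<subseteq> C V" using circ_mono[of "cube_top n" C, OF _ UV] by simp
  qed simp
next
  fix Os assume Os: "\<forall>V\<in>Os. openin (cube_top n) V"
  show "cube_gen n (\<Union>Os) \<subseteq> Id_on (\<Union>Os) \<union> (\<Union>V\<in>Os. cube_gen n V)\<^sup>+"
  proof
    fix p assume "p \<in> cube_gen n (\<Union>Os)"
    then obtain C where C: "is_circulation (cube_top n) C" "proj_directed n C" "p \<in> C (\<Union>Os)"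
      unfolding cube_gen_def by blast
    have "(\<Union>V\<in>Os. C V) \<subseteq> (\<Union>V\<in>Os. cube_gen n V)"
      using C(1,2) unfolding cube_gen_def by blast
    hence "(\<Union>V\<in>Os. C V)\<^sup>+ \<subseteq> (\<Union>V\<in>Os. cube_gen n V)\<^sup>+"
      by (rule trancl_mono_subset)
    thus "p \<in> Id_on (\<Union>Os) \<union> (\<Union>V\<in>Os. cube_gen n V)\<^sup>+"
      using C(3) circ_cosheaf[OF C(1) Os] by blast
  qed
qed

lemma cube_gen_proj_directed: "proj_directed n (gen_circ (cube_top n) (cube_gen n))"
  unfolding proj_directed_def stream_map_def
proof (intro allI impI conjI)
  fix i assume i: "i < n"
  show "continuous_map (cube_top n) interval_top (\<lambda>t. t i)"
    using i by (rule proj_continuous)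
  fix W x y assume W: "openin interval_top W"
  let ?U = "{z \<in> topspace (cube_top n). z i \<in> W}"
  assume xy: "(x, y) \<in> gen_circ (cube_top n) (cube_gen n) ?U"
  have "openin (cube_top n) ?U"
    using proj_continuous[OF i] W by (simp add: continuous_map_def)
  hence "(x, y) \<in> Id_on ?U \<union> (cube_gen n ?U)\<^sup>+"
    using xy by (simp add: gen_circ_def)
  thus "(x i, y i) \<in> interval_circ W"
  proof
    assume "(x, y) \<in> Id_on ?U"
    thus ?thesis using W by (auto intro: interval_circ_refl)
  next
    assume "(x, y) \<in> (cube_gen n ?U)\<^sup>+"
    thus ?thesis
    proof (rule trancl_map_into_trans[where f = "\<lambda>z. z i"])
      fix a b assume "(a, b) \<in> cube_gen n ?U"
      then obtain C where "proj_directed n C" "(a, b) \<in> C ?U"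
        unfolding cube_gen_def by blast
      thus "(a i, b i) \<in> interval_circ W"
        using i W by (blast intro: proj_directedD)
    qed (rule interval_circ_trans)
  qed
qed

lemma cube_circ_eq: "cube_circ n = gen_circ (cube_top n) (cube_gen n)"
  unfolding cube_circ_def proj_directed_def[symmetric]
proof (rule the_greatest_circ)
  show "is_circulation (cube_top n) (gen_circ (cube_top n) (cube_gen n)) \<and>
        proj_directed n (gen_circ (cube_top n) (cube_gen n))"
    using cube_gen_circulation cube_gen_proj_directed by blast
next
  fix C assume C: "is_circulation (cube_top n) C \<and> proj_directed n C"
  show "\<forall>V. C V \<subseteq> gen_circ (cube_top n) (cube_gen n) V"
  proof
    fix V show "C V \<subseteq> gen_circ (cube_top n) (cube_gen n) V"
    proof (cases "openin (cube_top n) V")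
      case True
      hence "C V \<subseteq> cube_gen n V" using C unfolding cube_gen_def by blast
      thus ?thesis using gen_circ_base[OF True] by blast
    next
      case False
      thus ?thesis using C unfolding is_circulation_def by blast
    qed
  qed
qed

lemma cube_circ_circulation: "is_circulation (cube_top n) (cube_circ n)"
  unfolding cube_circ_eq by (rule cube_gen_circulation)

text \<open>The only consequence of the directed structure of the cube that we need: every
directed relation of the cube increases all coordinates.\<close>

lemma cube_circ_coordinatewise:
  assumes xy: "(x, y) \<in> cube_circ n U" and i: "i < n"
  shows "x i \<le> y i"
proof -
  have U: "openin (cube_top n) U"
    using circ_opendom[OF cube_circ_circulation xy] .
  have whole: "openin (cube_top n) (cube n)"
    by (metis openin_topspace cube_top_def topspace_euclidean_subtopology)
  have "U \<subseteq> cube n"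
    using openin_subset[OF U] by (simp add: cube_top_def)
  hence "(x, y) \<in> cube_circ n (cube n)"
    using circ_mono[OF cube_circ_circulation U whole] xy by blast
  moreover have "cube n = {z \<in> topspace (cube_top n). z i \<in> {0..1}}"
    using i by (auto simp: cube_top_def cube_def)
  ultimately have xy': "(x, y) \<in> cube_circ n {z \<in> topspace (cube_top n). z i \<in> {0..1}}"
    by simp
  have "openin interval_top {0..1}"
    by (metis interval_top_def openin_topspace topspace_euclidean_subtopology)
  moreover have "proj_directed n (cube_circ n)"
    unfolding cube_circ_eq by (rule cube_gen_proj_directed)
  ultimately have "(x i, y i) \<in> interval_circ {0..1}"
    using i xy' by (blast intro: proj_directedD)
  thus ?thesis by (simp add: interval_circ_def split: if_splits)
qed

section \<open>The stream realization as a quotient\<close>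

locale realization =
  fixes X :: "'c set" and dm :: "'c \<Rightarrow> nat" and d :: "nat \<Rightarrow> bool \<Rightarrow> 'c \<Rightarrow> 'c"
begin

abbreviation "Rspace \<equiv> real_space X dm d"
abbreviation "Rtop \<equiv> real_top X dm d"
abbreviation "Requiv \<equiv> real_equiv X dm d"
abbreviation "cell \<equiv> real_map X dm d"

lemma openin_realization:
  "openin Rtop U \<longleftrightarrow> U \<subseteq> Rspace \<and> (\<forall>c\<in>X. openin (cube_top (dm c)) {t \<in> cube (dm c). cell c t \<in> U})"
proof -
  let ?open = "\<lambda>U. U \<subseteq> Rspace \<and> (\<forall>c\<in>X. openin (cube_top (dm c)) {t \<in> cube (dm c). cell c t \<in> U})"
  have "istopology ?open"
    unfolding istopology_def
  proof (rule conjI; intro allI impI)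
    fix S T assume "?open S" "?open T"
    moreover have "{t \<in> cube (dm c). cell c t \<in> S \<inter> T} =
        {t \<in> cube (dm c). cell c t \<in> S} \<inter> {t \<in> cube (dm c). cell c t \<in> T}" for c
      by blast
    ultimately show "?open (S \<inter> T)" by (auto intro: openin_Int)
  next
    fix K assume K: "\<forall>S\<in>K. ?open S"
    have "{t \<in> cube (dm c). cell c t \<in> \<Union>K} = (\<Union>S\<in>K. {t \<in> cube (dm c). cell c t \<in> S})" for c
      by blast
    thus "?open (\<Union>K)" using K by (auto intro!: openin_Union)
  qed
  thus ?thesis unfolding real_top_def by simp
qed

lemma cell_in_space: "c \<in> X \<Longrightarrow> t \<in> cube (dm c) \<Longrightarrow> cell c t \<in> Rspace"
  unfolding real_map_def real_space_def by (rule quotientI) (simp add: real_pts_def)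

lemma cell_mem_iff: "u \<in> cell c t \<longleftrightarrow> ((c, t), u) \<in> Requiv"
  unfolding real_map_def by simp

lemma in_own_cell: "c \<in> X \<Longrightarrow> t \<in> cube (dm c) \<Longrightarrow> (c, t) \<in> cell c t"
  unfolding real_map_def real_equiv_def by (simp add: real_pts_def Id_on_iff)

lemma space_cell:
  assumes "P \<in> Rspace"
  obtains c t where "c \<in> X" "t \<in> cube (dm c)" "P = cell c t"
  using assms unfolding real_space_def real_map_def real_pts_def by (auto elim!: quotientE)

lemma topspace_realization: "topspace Rtop = Rspace"
proof
  show "topspace Rtop \<subseteq> Rspace"
    unfolding topspace_def openin_realization by blast
  have "{t \<in> cube (dm c). cell c t \<in> Rspace} = topspace (cube_top (dm c))" if "c \<in> X" for c
    using cell_in_space that by (auto simp: cube_top_def)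
  hence "openin Rtop Rspace"
    unfolding openin_realization by simp
  thus "Rspace \<subseteq> topspace Rtop"
    by (rule openin_subset)
qed

lemma cell_continuous: "c \<in> X \<Longrightarrow> continuous_map (cube_top (dm c)) Rtop (cell c)"
  unfolding continuous_map_def topspace_realization
  using cell_in_space by (auto simp: openin_realization cube_top_def)

definition cell_pre :: "'c \<Rightarrow> ('c \<times> (nat \<Rightarrow> real)) set set \<Rightarrow> (nat \<Rightarrow> real) set" where
  "cell_pre c W = {t \<in> topspace (cube_top (dm c)). cell c t \<in> W}"

lemma cell_pre_open: "c \<in> X \<Longrightarrow> openin Rtop W \<Longrightarrow> openin (cube_top (dm c)) (cell_pre c W)"
  unfolding cell_pre_def using cell_continuous by (simp add: continuous_map_def)

definition cell_gen :: "('c \<times> (nat \<Rightarrow> real)) set set \<Rightarrow> (('c \<times> (nat \<Rightarrow> real)) set \<times> ('c \<times> (nat \<Rightarrow> real)) set) set" where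
  "cell_gen U = {(cell c x, cell c y) | c x y W. c \<in> X \<and> openin Rtop W \<and> W \<subseteq> U \<and>
      (x, y) \<in> cube_circ (dm c) (cell_pre c W)}"

text \<open>Locality of cell_gen: a directed relation in a cube over the preimage of W decomposes,
by the cosheaf condition of the cube, along the preimages of the W \<inter> V, V \<in> Os.\<close>

lemma cell_gen_local:
  assumes Os: "\<forall>V\<in>Os. openin Rtop V"
  shows "cell_gen (\<Union>Os) \<subseteq> Id_on (\<Union>Os) \<union> (\<Union>V\<in>Os. cell_gen V)\<^sup>+"
proof
  fix p assume "p \<in> cell_gen (\<Union>Os)"
  then obtain c x y W where p: "p = (cell c x, cell c y)" "c \<in> X" "openin Rtop W" "W \<subseteq> \<Union>Os"
    "(x, y) \<in> cube_circ (dm c) (cell_pre c W)"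
    unfolding cell_gen_def by blast
  let ?Ps = "(\<lambda>V. cell_pre c (W \<inter> V)) ` Os"
  have "\<forall>P\<in>?Ps. openin (cube_top (dm c)) P"
    using Os p(2,3) cell_pre_open by blast
  moreover have "\<Union>?Ps = cell_pre c W"
    using p(4) unfolding cell_pre_def by blast
  ultimately have "(x, y) \<in> Id_on (cell_pre c W) \<union> (\<Union>P\<in>?Ps. cube_circ (dm c) P)\<^sup>+"
    using circ_cosheaf[OF cube_circ_circulation, of ?Ps] p(5) by simp
  thus "p \<in> Id_on (\<Union>Os) \<union> (\<Union>V\<in>Os. cell_gen V)\<^sup>+"
  proof
    assume "(x, y) \<in> Id_on (cell_pre c W)"
    thus ?thesis using p(1,4) unfolding cell_pre_def by auto
  next
    assume xy: "(x, y) \<in> (\<Union>P\<in>?Ps. cube_circ (dm c) P)\<^sup>+"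
    have "(cell c x, cell c y) \<in> (\<Union>V\<in>Os. cell_gen V)\<^sup>+"
    proof (rule trancl_map_into_trans[OF xy _ trans_trancl])
      fix a b assume "(a, b) \<in> (\<Union>P\<in>?Ps. cube_circ (dm c) P)"
      then obtain V where V: "V \<in> Os" "(a, b) \<in> cube_circ (dm c) (cell_pre c (W \<inter> V))"
        by blast
      have "openin Rtop (W \<inter> V)" using V(1) Os p(3) by blast
      hence "(cell c a, cell c b) \<in> cell_gen V"
        unfolding cell_gen_def using V p(2) by blast
      thus "(cell c a, cell c b) \<in> (\<Union>V\<in>Os. cell_gen V)\<^sup>+"
        using V(1) by blast
    qed
    thus ?thesis using p(1) by blast
  qed
qed

lemma cell_gen_circulation: "is_circulation Rtop (gen_circ Rtop cell_gen)"
proof (rule gen_circ_is_circulation)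
  fix U show "cell_gen U \<subseteq> U \<times> U"
  proof
    fix p assume "p \<in> cell_gen U"
    then obtain c x y W where p: "p = (cell c x, cell c y)" "W \<subseteq> U"
      "(x, y) \<in> cube_circ (dm c) (cell_pre c W)"
      unfolding cell_gen_def by blast
    hence "x \<in> cell_pre c W" "y \<in> cell_pre c W"
      using circ_sub[OF cube_circ_circulation] by blast+
    thus "p \<in> U \<times> U" using p(1,2) unfolding cell_pre_def by blast
  qed
next
  fix U V assume "openin Rtop U" "openin Rtop V" "U \<subseteq> V"
  thus "cell_gen U \<subseteq> cell_gen V"
    unfolding cell_gen_def by blast
next
  fix Os assume "\<forall>V\<in>Os. openin Rtop V"
  thus "cell_gen (\<Union>Os) \<subseteq> Id_on (\<Union>Os) \<union> (\<Union>V\<in>Os. cell_gen V)\<^sup>+"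
    by (rule cell_gen_local)
qed

lemma cell_gen_stream_map:
  assumes c: "c \<in> X"
  shows "stream_map (cube_top (dm c)) (cube_circ (dm c)) Rtop (gen_circ Rtop cell_gen) (cell c)"
  unfolding stream_map_def
proof (intro conjI allI impI)
  show "continuous_map (cube_top (dm c)) Rtop (cell c)"
    using c by (rule cell_continuous)
  fix V x y assume V: "openin Rtop V"
    and xy: "(x, y) \<in> cube_circ (dm c) {z \<in> topspace (cube_top (dm c)). cell c z \<in> V}"
  have "(cell c x, cell c y) \<in> cell_gen V"
    unfolding cell_gen_def cell_pre_def using c V xy by blast
  thus "(cell c x, cell c y) \<in> gen_circ Rtop cell_gen V"
    using gen_circ_base[OF V] by blast
qed

lemma real_circ_eq: "real_circ X dm d = gen_circ Rtop cell_gen"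
  unfolding real_circ_def
proof (rule the_least_circ)
  show "is_circulation Rtop (gen_circ Rtop cell_gen) \<and>
    (\<forall>c\<in>X. stream_map (cube_top (dm c)) (cube_circ (dm c)) Rtop (gen_circ Rtop cell_gen) (cell c))"
    using cell_gen_circulation cell_gen_stream_map by blast
next
  fix C assume C: "is_circulation Rtop C \<and>
    (\<forall>c\<in>X. stream_map (cube_top (dm c)) (cube_circ (dm c)) Rtop C (cell c))"
  have "cell_gen U \<subseteq> C U" if U: "openin Rtop U" for U
  proof
    fix p assume "p \<in> cell_gen U"
    then obtain c x y W where p: "p = (cell c x, cell c y)" "c \<in> X" "openin Rtop W" "W \<subseteq> U"
      "(x, y) \<in> cube_circ (dm c) (cell_pre c W)"
      unfolding cell_gen_def by blast
    have "(cell c x, cell c y) \<in> C W"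
      using C p(2,3,5) unfolding stream_map_def cell_pre_def by blast
    thus "p \<in> C U" using circ_mono[of Rtop C, OF _ p(3) U p(4)] C p(1) by blast
  qed
  thus "\<forall>V. gen_circ Rtop cell_gen V \<subseteq> C V"
    using C gen_circ_least by blast
qed

lemma real_equiv_invariant:
  assumes gen: "\<And>c i k t. c \<in> X \<Longrightarrow> i < dm c \<Longrightarrow> t \<in> cube (dm c - 1) \<Longrightarrow>
      f (d i k c, t) = f (c, coface i k t)"
    and uv: "(u, v) \<in> Requiv"
  shows "f u = f v"
proof -
  let ?S = "{(u, v). f u = f v}"
  have "trans ?S" by (rule transI) simp
  moreover have "real_gen X dm d \<union> (real_gen X dm d)\<inverse> \<subseteq> ?S"
    unfolding real_gen_def using gen by auto
  ultimately have "(real_gen X dm d \<union> (real_gen X dm d)\<inverse>)\<^sup>+ \<subseteq> ?S"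
    by (intro trancl_least)
  thus ?thesis using uv unfolding real_equiv_def by auto
qed

end

lemma coface_coords:
  assumes i: "i < Suc n"
  shows "coface i k t ` {..<Suc n} = insert (of_bool k) (t ` {..<n})"
proof
  show "coface i k t ` {..<Suc n} \<subseteq> insert (of_bool k) (t ` {..<n})"
  proof
    fix v assume "v \<in> coface i k t ` {..<Suc n}"
    then obtain j where j: "j < Suc n" "v = coface i k t j" by blast
    consider "j < i" | "j = i" | "i < j" by linarith
    thus "v \<in> insert (of_bool k) (t ` {..<n})"
      by cases (use i j in \<open>auto simp: coface_def\<close>)
  qed
  have "of_bool k = coface i k t i" by (simp add: coface_def)
  moreover have "t j \<in> coface i k t ` {..<Suc n}" if "j < n" for j
  proof (cases "j < i")
    case True
    thus ?thesis using that by (force simp: coface_def)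
  next
    case False
    hence "t j = coface i k t (Suc j)" by (simp add: coface_def)
    thus ?thesis using that by blast
  qed
  ultimately show "insert (of_bool k) (t ` {..<n}) \<subseteq> coface i k t ` {..<Suc n}"
    using i by auto
qed

lemma sum_coface:
  fixes g :: "real \<Rightarrow> 'a::comm_monoid_add"
  assumes "i \<le> n"
  shows "(\<Sum>j<Suc n. g (coface i k t j)) = g (of_bool k) + (\<Sum>j<n. g (t j))"
  using assms
proof (induction n rule: dec_induct)
  case base
  have "(\<Sum>j<i. g (coface i k t j)) = (\<Sum>j<i. g (t j))"
    by (intro sum.cong) (auto simp: coface_def)
  thus ?case by (simp add: coface_def add.commute)
next
  case (step m)
  have "coface i k t (Suc m) = t m" using step(1) by (simp add: coface_def)
  thus ?case using step(3) by (simp add: add.assoc)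
qed

section \<open>A potential on the cubes\<close>

text \<open>For 0 \<le> \<theta> < 1 the constant
coordinates 0 and 1 contribute nothing, so the potential is invariant under cofaces; on the
other hand it strictly increases along directed paths that avoid the hyperplanes t j = \<theta>.\<close>

definition potential :: "real \<Rightarrow> nat \<Rightarrow> (nat \<Rightarrow> real) \<Rightarrow> real" where
  "potential \<theta> n t = (\<Sum>j<n. t j - of_bool (\<theta> < t j))"

lemma potential_coface:
  assumes "0 \<le> \<theta>" "\<theta> < 1" "i < Suc n"
  shows "potential \<theta> (Suc n) (coface i k t) = potential \<theta> n t"
proof -
  have "of_bool k - of_bool (\<theta> < of_bool k) = (0::real)"
    using assms(1,2) by (cases k) auto
  thus ?thesis unfolding potential_def using assms(3)
    by (subst sum_coface[where g = "\<lambda>v. v - of_bool (\<theta> < v)"]) simp_all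
qed

definition same_side :: "real \<Rightarrow> nat \<Rightarrow> (nat \<Rightarrow> real) \<Rightarrow> (nat \<Rightarrow> real) set" where
  "same_side \<theta> n a = {t. \<forall>j<n. (\<theta> < t j \<and> \<theta> < a j) \<or> (t j < \<theta> \<and> \<not> \<theta> < a j)}"

lemma open_same_side: "open (same_side \<theta> n a)"
proof -
  have "same_side \<theta> n a = (\<Inter>j<n. {t. (\<theta> < t j \<and> \<theta> < a j) \<or> (t j < \<theta> \<and> \<not> \<theta> < a j)})"
    unfolding same_side_def by blast
  moreover have "open {t::nat \<Rightarrow> real. (\<theta> < t j \<and> \<theta> < a j) \<or> (t j < \<theta> \<and> \<not> \<theta> < a j)}" for j
    by (intro open_Collect_disj open_Collect_conj open_Collect_less open_Collect_const
        continuous_on_const continuous_on_product_coordinates)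
  ultimately show ?thesis by auto
qed

lemma self_same_side: "\<theta> \<notin> a ` {..<n} \<Longrightarrow> a \<in> same_side \<theta> n a"
  unfolding same_side_def by (auto simp: neq_iff)

lemma potential_same_side:
  assumes cube: "x \<in> cube n" "y \<in> cube n" and side: "x \<in> same_side \<theta> n a" "y \<in> same_side \<theta> n a"
    and le: "\<forall>j<n. x j \<le> y j"
  shows "potential \<theta> n x < potential \<theta> n y \<or> x = y"
proof (cases "\<exists>j<n. x j < y j")
  case True
  have "of_bool (\<theta> < x j) = (of_bool (\<theta> < y j) :: real)" if "j < n" for j
    using side that unfolding same_side_def by auto
  hence "potential \<theta> n x < potential \<theta> n y"
    unfolding potential_def using le True by (intro sum_strict_mono_ex1) auto
  thus ?thesis ..
next
  case False
  hence "x j = y j" for j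
    using le cube unfolding cube_def by (cases "j < n") force+
  thus ?thesis by blast
qed

lemma same_side_cover:
  assumes U: "openin (cube_top n) U" and avoid: "\<forall>t\<in>U. \<theta> \<notin> t ` {..<n}"
  shows "\<forall>P\<in>(\<lambda>a. U \<inter> same_side \<theta> n a) ` U. openin (cube_top n) P"
    and "\<Union>((\<lambda>a. U \<inter> same_side \<theta> n a) ` U) = U"
proof -
  have "U = U \<inter> cube n"
    using openin_subset[OF U] by (auto simp: cube_top_def)
  moreover have "openin (cube_top n) (cube n \<inter> same_side \<theta> n a)" for a
    unfolding cube_top_def using open_same_side by (intro openin_open_Int)
  ultimately show "\<forall>P\<in>(\<lambda>a. U \<inter> same_side \<theta> n a) ` U. openin (cube_top n) P"
    using U by (metis (no_types, lifting) imageE inf_assoc openin_Int)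
  show "\<Union>((\<lambda>a. U \<inter> same_side \<theta> n a) ` U) = U"
  proof
    show "U \<subseteq> \<Union>((\<lambda>a. U \<inter> same_side \<theta> n a) ` U)"
    proof
      fix a assume "a \<in> U"
      hence "a \<in> U \<inter> same_side \<theta> n a" using avoid self_same_side by simp
      thus "a \<in> \<Union>((\<lambda>a. U \<inter> same_side \<theta> n a) ` U)" using \<open>a \<in> U\<close> by blast
    qed
  qed blast
qed

text \<open>The directed relation of the cube over an open set avoiding the hyperplanes
t j = \<theta> increases the potential strictly (unless trivial): decompose along the cover by
the regions same_side \<theta> n a, on each of which the potential is the coordinate sum up to
a constant.\<close>

lemma cube_circ_potential:
  assumes xy: "(x, y) \<in> cube_circ n U" and avoid: "\<forall>t\<in>U. \<theta> \<notin> t ` {..<n}"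
  shows "(x, y) \<in> ascends (potential \<theta> n)"
proof -
  have U: "openin (cube_top n) U"
    using circ_opendom[OF cube_circ_circulation xy] .
  hence U_cube: "U \<subseteq> cube n"
    using openin_subset by (force simp: cube_top_def)
  let ?Ps = "(\<lambda>a. U \<inter> same_side \<theta> n a) ` U"
  have "(x, y) \<in> Id_on U \<union> (\<Union>P\<in>?Ps. cube_circ n P)\<^sup>+"
    using circ_cosheaf[OF cube_circ_circulation same_side_cover(1)[OF U avoid]]
      same_side_cover(2)[OF U avoid] xy by simp
  moreover have "(\<Union>P\<in>?Ps. cube_circ n P) \<subseteq> ascends (potential \<theta> n)"
  proof (rule subrelI)
    fix u v assume "(u, v) \<in> (\<Union>P\<in>?Ps. cube_circ n P)"
    then obtain a where uv: "(u, v) \<in> cube_circ n (U \<inter> same_side \<theta> n a)"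
      by blast
    hence "u \<in> U \<inter> same_side \<theta> n a" "v \<in> U \<inter> same_side \<theta> n a"
      using circ_sub[OF cube_circ_circulation] by blast+
    moreover have "\<forall>j<n. u j \<le> v j"
      using cube_circ_coordinatewise[OF uv] by blast
    ultimately show "(u, v) \<in> ascends (potential \<theta> n)"
      using potential_same_side U_cube unfolding ascends_def by blast
  qed
  hence "(\<Union>P\<in>?Ps. cube_circ n P)\<^sup>+ \<subseteq> ascends (potential \<theta> n)"
    using trans_ascends by (rule trancl_least)
  ultimately show ?thesis by (auto simp: ascends_def)
qed

section \<open>Vortex-free neighbourhoods in the realization\<close>

lemma precubical_face_dim:
  "precubical X dm d \<Longrightarrow> c \<in> X \<Longrightarrow> i < dm c \<Longrightarrow> dm (d i k c) = dm c - 1"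
  unfolding precubical_def by blast

locale precubical_realization = realization X dm d
  for X :: "'c set" and dm :: "'c \<Rightarrow> nat" and d :: "nat \<Rightarrow> bool \<Rightarrow> 'c \<Rightarrow> 'c" +
  assumes precubical: "precubical X dm d"
begin

lemma coface_invariant:
  assumes F: "\<And>n i k t. i < Suc n \<Longrightarrow> F (Suc n) (coface i k t) = F n t"
    and uv: "(u, v) \<in> Requiv"
  shows "F (dm (fst u)) (snd u) = F (dm (fst v)) (snd v)"
proof (rule real_equiv_invariant[OF _ uv])
  fix c i k t assume c: "c \<in> X" and i: "i < dm c"
  hence "dm c = Suc (dm (d i k c))"
    using precubical_face_dim[OF precubical] by simp
  thus "F (dm (fst (d i k c, t))) (snd (d i k c, t)) = F (dm (fst (c, coface i k t))) (snd (c, coface i k t))"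
    using F i by simp
qed

definition avoiding :: "real \<Rightarrow> ('c \<times> (nat \<Rightarrow> real)) set set" where
  "avoiding \<theta> = {P \<in> Rspace. \<forall>(c, t)\<in>P. \<theta> \<notin> t ` {..<dm c}}"

lemma cell_avoiding_iff:
  assumes \<theta>: "0 < \<theta>" "\<theta> < 1" and c: "c \<in> X" and t: "t \<in> cube (dm c)"
  shows "cell c t \<in> avoiding \<theta> \<longleftrightarrow> \<theta> \<notin> t ` {..<dm c}"
proof -
  have coface_avoid: "(\<theta> \<notin> coface i k s ` {..<Suc n}) = (\<theta> \<notin> s ` {..<n})" if "i < Suc n" for n i k s
    using \<theta> that by (simp add: coface_coords)
  have "(\<theta> \<notin> t ` {..<dm c}) = (\<theta> \<notin> t' ` {..<dm c'})" if "(c', t') \<in> cell c t" for c' t'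
  proof -
    have "((c, t), c', t') \<in> Requiv" using that by (simp add: cell_mem_iff)
    from coface_invariant[where F = "\<lambda>n t. \<theta> \<notin> t ` {..<n}", OF coface_avoid this]
    show ?thesis by simp
  qed
  thus ?thesis
    using in_own_cell[OF c t] cell_in_space[OF c t] unfolding avoiding_def by fast
qed

lemma avoiding_open:
  assumes "0 < \<theta>" "\<theta> < 1"
  shows "openin Rtop (avoiding \<theta>)"
  unfolding openin_realization
proof (intro conjI ballI)
  show "avoiding \<theta> \<subseteq> Rspace" unfolding avoiding_def by blast
  fix c assume c: "c \<in> X"
  have "{t \<in> cube (dm c). cell c t \<in> avoiding \<theta>} = cube (dm c) \<inter> (\<Inter>j<dm c. {t. t j \<noteq> \<theta>})"
    using cell_avoiding_iff[OF assms c] by auto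
  moreover have "open (\<Inter>j<dm c. {t::nat \<Rightarrow> real. t j \<noteq> \<theta>})"
    by (intro open_INT finite_lessThan ballI open_Collect_neq continuous_on_const
        continuous_on_product_coordinates)
  ultimately show "openin (cube_top (dm c)) {t \<in> cube (dm c). cell c t \<in> avoiding \<theta>}"
    unfolding cube_top_def by (simp add: openin_open_Int)
qed

definition class_potential :: "real \<Rightarrow> ('c \<times> (nat \<Rightarrow> real)) set \<Rightarrow> real" where
  "class_potential \<theta> P = (let u = SOME u. u \<in> P in potential \<theta> (dm (fst u)) (snd u))"

lemma class_potential_cell:
  assumes "0 \<le> \<theta>" "\<theta> < 1" "c \<in> X" "t \<in> cube (dm c)"
  shows "class_potential \<theta> (cell c t) = potential \<theta> (dm c) t"
proof -
  have "(SOME u. u \<in> cell c t) \<in> cell c t"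
    using in_own_cell[OF assms(3,4)] by (rule someI)
  hence "((c, t), SOME u. u \<in> cell c t) \<in> Requiv"
    by (simp add: cell_mem_iff)
  thus ?thesis
    unfolding class_potential_def Let_def
    using coface_invariant[where F = "potential \<theta>"] potential_coface[OF assms(1,2)]
    by (metis fst_conv snd_conv)
qed

text \<open>Every generating step of the circulation over avoiding \<theta> comes from a directed
relation in a cube avoiding the hyperplanes t j = \<theta>, hence increases the class potential.\<close>

lemma avoiding_antisym:
  assumes \<theta>: "0 < \<theta>" "\<theta> < 1"
  shows "antisym (real_circ X dm d (avoiding \<theta>))"
proof -
  have "cell_gen (avoiding \<theta>) \<subseteq> ascends (class_potential \<theta>)"
  proof
    fix p assume "p \<in> cell_gen (avoiding \<theta>)"
    then obtain c x y W where p: "p = (cell c x, cell c y)" "c \<in> X" "W \<subseteq> avoiding \<theta>"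
      "(x, y) \<in> cube_circ (dm c) (cell_pre c W)"
      unfolding cell_gen_def by blast
    have pre_cube: "cell_pre c W \<subseteq> cube (dm c)"
      unfolding cell_pre_def by (auto simp: cube_top_def)
    have "\<forall>t\<in>cell_pre c W. \<theta> \<notin> t ` {..<dm c}"
      using cell_avoiding_iff[OF \<theta> p(2)] pre_cube p(3) unfolding cell_pre_def by blast
    with p(4) have "(x, y) \<in> ascends (potential \<theta> (dm c))"
      by (rule cube_circ_potential)
    moreover have "x \<in> cube (dm c)" "y \<in> cube (dm c)"
      using circ_sub[OF cube_circ_circulation] p(4) pre_cube by blast+
    ultimately show "p \<in> ascends (class_potential \<theta>)"
      using class_potential_cell[of \<theta> c] \<theta> p(1,2) unfolding ascends_def by auto
  qed
  hence "antisym (Id_on (avoiding \<theta>) \<union> (cell_gen (avoiding \<theta>))\<^sup>+)"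
    by (rule antisym_by_potential)
  thus ?thesis
    using avoiding_open[OF \<theta>] by (simp add: real_circ_eq gen_circ_def)
qed

text \<open>Every point lies in some avoiding \<theta>: take for \<theta> any number in ]0,1[ that is not
a coordinate of a representative.\<close>

lemma exists_avoiding_nbhd:
  assumes "P \<in> Rspace"
  obtains \<theta> where "0 < \<theta>" "\<theta> < 1" "P \<in> avoiding \<theta>"
proof -
  obtain c t where ct: "c \<in> X" "t \<in> cube (dm c)" "P = cell c t"
    using assms by (rule space_cell)
  have "infinite ({0<..<1::real} - t ` {..<dm c})"
    by (intro Diff_infinite_finite finite_imageI finite_lessThan infinite_Ioo) simp
  then obtain \<theta> where "\<theta> \<in> {0<..<1}" "\<theta> \<notin> t ` {..<dm c}"
    by (metis Diff_iff ex_in_conv finite.emptyI)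
  thus ?thesis
    using that cell_avoiding_iff[OF _ _ ct(1,2)] ct(3) by auto
qed

end

theorem mainTheorem2:
  fixes X :: "'c set" and dm :: "'c \<Rightarrow> nat" and d :: "nat \<Rightarrow> bool \<Rightarrow> 'c \<Rightarrow> 'c"
  assumes "precubical X dm d"
  shows "vortex_free (real_top X dm d) (real_circ X dm d)"
proof -
  interpret precubical_realization X dm d
    using assms by unfold_locales
  have "\<not> vortex Rtop (real_circ X dm d) P" if "P \<in> topspace Rtop" for P
  proof -
    obtain \<theta> where \<theta>: "0 < \<theta>" "\<theta> < 1" "P \<in> avoiding \<theta>"
      using \<open>P \<in> topspace Rtop\<close> topspace_realization exists_avoiding_nbhd by metis
    thus ?thesis
      using avoiding_open avoiding_antisym unfolding vortex_def by blast
  qed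
  thus ?thesis unfolding vortex_free_def by blast
qed

end
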